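(* Let $(I,s,B,k)$ be an instance of Exact Bin Packing. Let $T$ be the tree with vertex set $\{r\}\cup\{v^i,v^i_1,\dots,v^i_{s(i)-1}: i\in I\}$ and edge set $\{\{v^i,v^i_j\}: i\in I,\,1\le j\le s(i)-1\}\cup\{\{r,v^i\}: i\in I\}$ (i.e., for each item a star with centre $v^i$ and $s(i)-1$ leaves, each centre joined to a root $r$). Then $(I,s,B,k)$ is a yes-instance of Exact Bin Packing if and only if the Collective Graph Exploration instance $(T,r,k,2B)$ is a yes-instance, i.e., there exist $k$ $r$-robot cycles in $T$, each of length at most $2B$, which together traverse every edge of $T$.
   Context: Exact Bin Packing: given a finite set $I$ of items, a positive size $s(i)\in\mathbb{N}$ for each $i\in I$, a positive integer $B$ and a positive integer $k$ with $\sum_{i\in I}s(i)=B\cdot k$, decide whether there is a partition of $I$ into disjoint sets $I_1,\dots,I_k$ with $\sum_{i\in I_j}s(i)=B$ for all $j$. A path in a graph is a sequence $(v_0,\dots,v_\ell)$ of vertices with consecutive vertices adjacent (repetitions allowed), of length $\ell$; a cycle is a path with $v_0=v_\ell$; an $r$-robot cycle is a cycle with $v_0=v_\ell=r$. The CGE instance $(G,v_{\mathsf{init}},k,B)$ is a yes-instance if there are $k$ $v_{\mathsf{init}}$-robot cycles, each of length at most $B$, such that every edge of $G$ is traversed by at least one of them. *)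

theory Defs
  imports Main
begin

definition ebp_yes :: "'a set \<Rightarrow> ('a \<Rightarrow> nat) \<Rightarrow> nat \<Rightarrow> nat \<Rightarrow> bool" where
  "ebp_yes I s B k \<longleftrightarrow>
     (\<exists>P :: nat \<Rightarrow> 'a set.
        (\<Union>j<k. P j) = I \<and>
        (\<forall>j<k. \<forall>j'<k. j \<noteq> j' \<longrightarrow> P j \<inter> P j' = {}) \<and>
        (\<forall>j<k. sum s (P j) = B))"

text \<open>Undirected graphs are given by their edge sets (edges are two-element vertex sets).
  A path is a nonempty list of vertices with consecutive vertices adjacent; its length is the
  number of steps.\<close>
definition is_path :: "'v set set \<Rightarrow> 'v list \<Rightarrow> bool" where
  "is_path E ps \<longleftrightarrow> ps \<noteq> [] \<and> (\<forall>t. Suc t < length ps \<longrightarrow> {ps ! t, ps ! Suc t} \<in> E)"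

definition path_len :: "'v list \<Rightarrow> nat" where
  "path_len ps = length ps - 1"

definition robot_cycle :: "'v set set \<Rightarrow> 'v \<Rightarrow> 'v list \<Rightarrow> bool" where
  "robot_cycle E r ps \<longleftrightarrow> is_path E ps \<and> hd ps = r \<and> last ps = r"

definition traverses :: "'v list \<Rightarrow> 'v set \<Rightarrow> bool" where
  "traverses ps e \<longleftrightarrow> (\<exists>t. Suc t < length ps \<and> {ps ! t, ps ! Suc t} = e)"

definition cge_yes :: "'v set set \<Rightarrow> 'v \<Rightarrow> nat \<Rightarrow> nat \<Rightarrow> bool" where
  "cge_yes E v0 k B \<longleftrightarrow>
     (\<exists>W :: nat \<Rightarrow> 'v list.
        (\<forall>j<k. robot_cycle E v0 (W j) \<and> path_len (W j) \<le> B) \<and>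
        (\<forall>e\<in>E. \<exists>j<k. traverses (W j) e))"

datatype 'a tvert = Root | Ctr 'a | Lf 'a nat

definition tree_edges :: "'a set \<Rightarrow> ('a \<Rightarrow> nat) \<Rightarrow> 'a tvert set set" where
  "tree_edges I s =
     {{Ctr i, Lf i j} | i j. i \<in> I \<and> 1 \<le> j \<and> j \<le> s i - 1}
     \<union> {{Root, Ctr i} | i. i \<in> I}"

end

theory Submission
  imports Defs
begin

text \<open>Every edge of the tree is the only edge leaving some vertex set that avoids the root
  (a single leaf, or a whole star), so a closed walk from the root that uses an edge must use it
  at least twice: once to enter the set and once to leave it. Hence a robot cycle of length at
  most \<open>2B\<close> covers at most \<open>B\<close> edges. As the tree has \<open>\<Sum>s = Bk\<close> edges, the \<open>k\<close> cycles of a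
  solution cover pairwise disjoint sets of exactly \<open>B\<close> edges. A cycle using an edge of the star
  of item \<open>i\<close> uses its root edge, so each cycle covers complete stars, and the items of these
  stars form a bin of size \<open>B\<close>. Conversely, the stars of a bin of size \<open>B\<close> are toured one
  after another in \<open>2B\<close> steps.\<close>

lemma nat_crossing:
  assumes "P a" "\<not> P b" "a \<le> b"
  shows "\<exists>m. a \<le> m \<and> m < b \<and> P m \<and> \<not> P (Suc m)"
  using dec_induct[of a b P] assms by blast

lemma two_card_image_le:
  assumes "finite A" and "\<And>a. a \<in> A \<Longrightarrow> \<exists>b\<in>A. b \<noteq> a \<and> f b = f a"
  shows "2 * card (f ` A) \<le> card A"
proof -
  have fibres: "A = (\<Union>d\<in>f ` A. {a\<in>A. f a = d})" by auto
  have "card A = (\<Sum>d\<in>f ` A. card {a\<in>A. f a = d})"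
    by (subst fibres, rule card_UN_disjoint) (use assms(1) in auto)
  moreover have "2 \<le> card {a\<in>A. f a = d}" if d: "d \<in> f ` A" for d
  proof -
    obtain a b where "a \<in> A" "b \<in> A" "b \<noteq> a" "f a = d" "f b = d"
      using d assms(2) by blast
    then have "{a, b} \<subseteq> {a\<in>A. f a = d}" by auto
    with \<open>b \<noteq> a\<close> show ?thesis
      using card_mono[of "{a\<in>A. f a = d}" "{a, b}"] assms(1) by simp
  qed
  ultimately show ?thesis
    using sum_mono[of "f ` A" "\<lambda>_. 2::nat" "\<lambda>d. card {a\<in>A. f a = d}"] by simp
qed

lemma is_path_Cons_Cons: "is_path E (x # y # zs) \<longleftrightarrow> {x, y} \<in> E \<and> is_path E (y # zs)"
proof
  assume "is_path E (x # y # zs)"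
  then have step: "{(x # y # zs) ! t, (x # y # zs) ! Suc t} \<in> E"
    if "Suc t < length (x # y # zs)" for t
    using that by (simp add: is_path_def)
  show "{x, y} \<in> E \<and> is_path E (y # zs)"
    using step[of 0] step[of "Suc t" for t] by (simp add: is_path_def)
next
  assume "{x, y} \<in> E \<and> is_path E (y # zs)"
  then show "is_path E (x # y # zs)"
    unfolding is_path_def by (auto simp: less_Suc_eq_0_disj)
qed

lemma is_path_append:
  "is_path E (xs @ [z]) \<Longrightarrow> is_path E (z # ys) \<Longrightarrow> is_path E (xs @ z # ys)"
proof (induction xs)
  case (Cons a xs)
  then show ?case by (cases xs) (simp_all add: is_path_Cons_Cons)
qed simp

lemma traverses_append_Cons_Cons: "traverses (xs @ a # b # ys) {a, b}"
  unfolding traverses_def by (rule exI[of _ "length xs"]) (simp add: nth_append)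

definition traversed_edges :: "'v list \<Rightarrow> 'v set set" where
  "traversed_edges ps = {e. traverses ps e}"

lemma traversed_edges_eq_image:
  "traversed_edges ps = (\<lambda>t. {ps ! t, ps ! Suc t}) ` {..<path_len ps}"
  unfolding traversed_edges_def traverses_def path_len_def by (auto simp: less_diff_conv)

lemma finite_traversed_edges: "finite (traversed_edges ps)"
  by (simp add: traversed_edges_eq_image)

lemma traversed_edges_subset: "is_path E ps \<Longrightarrow> traversed_edges ps \<subseteq> E"
  unfolding traversed_edges_def traverses_def is_path_def by auto

definition only_edge_leaving :: "'v set set \<Rightarrow> 'v set \<Rightarrow> 'v \<Rightarrow> 'v \<Rightarrow> bool" where
  "only_edge_leaving E S x y \<longleftrightarrow>
     x \<in> S \<and> y \<notin> S \<and> (\<forall>u v. {u, v} \<in> E \<longrightarrow> u \<in> S \<longrightarrow> v \<notin> S \<longrightarrow> {u, v} = {x, y})"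

lemma path_enters_through_only_edge:
  assumes "is_path E ps" "only_edge_leaving E S x y"
    and "hd ps \<notin> S" "p < length ps" "ps ! p \<in> S"
  shows "\<exists>t<p. {ps ! t, ps ! Suc t} = {x, y}"
proof -
  have "ps ! 0 \<notin> S" using assms(1,3) by (simp add: is_path_def hd_conv_nth)
  then obtain m where m: "m < p" "ps ! m \<notin> S" "ps ! Suc m \<in> S"
    using nat_crossing[of "\<lambda>m. ps ! m \<notin> S" 0 p] assms(5) by auto
  have "{ps ! Suc m, ps ! m} \<in> E"
    using assms(1,4) m(1) by (simp add: is_path_def insert_commute)
  then have "{ps ! Suc m, ps ! m} = {x, y}"
    using assms(2) m unfolding only_edge_leaving_def by blast
  with m(1) show ?thesis by (auto simp: insert_commute)
qed

lemma path_leaves_through_only_edge: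
  assumes "is_path E ps" "only_edge_leaving E S x y"
    and "last ps \<notin> S" "p < length ps" "ps ! p \<in> S"
  shows "\<exists>t\<ge>p. Suc t < length ps \<and> {ps ! t, ps ! Suc t} = {x, y}"
proof -
  have "ps ! (length ps - 1) \<notin> S" using assms(1,3) by (simp add: is_path_def last_conv_nth)
  moreover have "p \<le> length ps - 1" using assms(4) by simp
  ultimately obtain m where m: "p \<le> m" "m < length ps - 1" "ps ! m \<in> S" "ps ! Suc m \<notin> S"
    using nat_crossing[of "\<lambda>m. ps ! m \<in> S" p "length ps - 1"] assms(5) by blast
  have "{ps ! m, ps ! Suc m} \<in> E" using assms(1) m(2) by (simp add: is_path_def)
  then have "{ps ! m, ps ! Suc m} = {x, y}"
    using assms(2) m unfolding only_edge_leaving_def by blast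
  with m show ?thesis by auto
qed

lemma robot_cycle_traverses_only_edge_twice:
  assumes "robot_cycle E r ps" "only_edge_leaving E S x y" "r \<notin> S"
    and "Suc t < length ps" "{ps ! t, ps ! Suc t} = {x, y}"
  shows "\<exists>t'. t' \<noteq> t \<and> Suc t' < length ps \<and> {ps ! t', ps ! Suc t'} = {x, y}"
proof -
  have p: "is_path E ps" "hd ps \<notin> S" "last ps \<notin> S"
    using assms(1,3) by (auto simp: robot_cycle_def)
  have "x \<in> S" "y \<notin> S" using assms(2) by (auto simp: only_edge_leaving_def)
  then consider "ps ! t = x" | "ps ! Suc t = x"
    using assms(5) by (auto simp: doubleton_eq_iff)
  then show ?thesis
  proof cases
    case 1
    with \<open>x \<in> S\<close> show ?thesis
      using path_enters_through_only_edge[OF p(1) assms(2) p(2), of t] assms(4) by force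
  next
    case 2
    with \<open>x \<in> S\<close> show ?thesis
      using path_leaves_through_only_edge[OF p(1) assms(2) p(3), of "Suc t"] assms(4) by force
  qed
qed

text \<open>Each traversed edge is the image of at least two steps of the walk.\<close>
lemma robot_cycle_card_traversed_edges:
  assumes "robot_cycle E r ps"
    and "\<And>e. e \<in> E \<Longrightarrow> \<exists>x y S. e = {x, y} \<and> r \<notin> S \<and> only_edge_leaving E S x y"
  shows "2 * card (traversed_edges ps) \<le> path_len ps"
proof -
  define step where "step t = {ps ! t, ps ! Suc t}" for t
  have "2 * card (step ` {..<path_len ps}) \<le> card {..<path_len ps}"
  proof (rule two_card_image_le)
    fix t assume t: "t \<in> {..<path_len ps}"
    then have "step t \<in> E"
      using assms(1) traversed_edges_subset traversed_edges_eq_image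
      unfolding robot_cycle_def step_def by blast
    then obtain x y S where "step t = {x, y}" "r \<notin> S" "only_edge_leaving E S x y"
      using assms(2) by blast
    with t show "\<exists>t'\<in>{..<path_len ps}. t' \<noteq> t \<and> step t' = step t"
      using robot_cycle_traverses_only_edge_twice[OF assms(1), of S x y t]
      unfolding step_def path_len_def by fastforce
  qed simp
  then show ?thesis by (simp add: traversed_edges_eq_image step_def)
qed

lemma card_eq_bound_if_card_UN_ge:
  assumes "finite J" "\<And>j. j \<in> J \<Longrightarrow> card (D j) \<le> b"
    and "b * card J \<le> card (\<Union>j\<in>J. D j)" and "j \<in> J"
  shows "card (D j) = b"
proof (rule ccontr)
  assume "card (D j) \<noteq> b"
  with assms(2,4) have "card (D j) < b" by fastforce
  then have "(\<Sum>j\<in>J. card (D j)) < (\<Sum>j\<in>J. b)"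
    using assms(1,2,4) by (intro sum_strict_mono_ex1) auto
  moreover have "card (\<Union>j\<in>J. D j) \<le> (\<Sum>j\<in>J. card (D j))"
    using assms(1) by (rule card_UN_le)
  ultimately show False using assms(3) by (simp add: mult.commute)
qed

lemma disjoint_if_card_UN_ge:
  assumes "finite J" "\<And>j. j \<in> J \<Longrightarrow> finite (D j)" "\<And>j. j \<in> J \<Longrightarrow> card (D j) \<le> b"
    and "b * card J \<le> card (\<Union>j\<in>J. D j)" and "a \<in> J" "c \<in> J" "a \<noteq> c"
  shows "D a \<inter> D c = {}"
proof (rule ccontr)
  assume "D a \<inter> D c \<noteq> {}"
  then have "D a - D c \<subset> D a" by blast
  then have "card (D a - D c) < card (D a)"
    using assms(2,5) by (simp add: psubset_card_mono)
  also have "\<dots> \<le> b" using assms(3,5) .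
  finally have less: "card (D a - D c) < b" .
  have "(\<Union>j\<in>J. D j) \<subseteq> (D a - D c) \<union> (\<Union>j\<in>J - {a}. D j)"
    using assms(6,7) by blast
  then have "card (\<Union>j\<in>J. D j) \<le> card ((D a - D c) \<union> (\<Union>j\<in>J - {a}. D j))"
    using assms(1,2,5) by (intro card_mono) auto
  also have "\<dots> \<le> card (D a - D c) + card (\<Union>j\<in>J - {a}. D j)"
    by (rule card_Un_le)
  also have "card (\<Union>j\<in>J - {a}. D j) \<le> (\<Sum>j\<in>J - {a}. card (D j))"
    using assms(1) by (intro card_UN_le) simp
  also have "\<dots> \<le> (card J - 1) * b"
    using sum_mono[of "J - {a}" "\<lambda>j. card (D j)" "\<lambda>_. b"] assms(1,3,5) by simp
  finally have "card (\<Union>j\<in>J. D j) < b + (card J - 1) * b" using less by linarith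
  also have "\<dots> = b * card J"
    using assms(1,5) by (cases "card J") (auto simp: card_gt_0_iff[symmetric] algebra_simps)
  finally show False using assms(4) by simp
qed

definition star_edges :: "('a \<Rightarrow> nat) \<Rightarrow> 'a \<Rightarrow> 'a tvert set set" where
  "star_edges s i = insert {Root, Ctr i} ((\<lambda>j. {Ctr i, Lf i j}) ` {1..<s i})"

lemma tree_edges_eq_UN_star_edges: "tree_edges I s = (\<Union>i\<in>I. star_edges s i)"
  unfolding tree_edges_def star_edges_def by fastforce

lemma finite_star_edges: "finite (star_edges s i)"
  by (simp add: star_edges_def)

lemma star_edges_disjoint: "i \<noteq> i' \<Longrightarrow> star_edges s i \<inter> star_edges s i' = {}"
  unfolding star_edges_def by (auto simp: doubleton_eq_iff)

lemma card_star_edges: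
  assumes "s i > 0"
  shows "card (star_edges s i) = s i"
proof -
  have "inj_on (\<lambda>j. {Ctr i, Lf i j}) {1..<s i}"
    by (auto simp: inj_on_def doubleton_eq_iff)
  moreover have "{Root, Ctr i} \<notin> (\<lambda>j. {Ctr i, Lf i j}) ` {1..<s i}"
    by (auto simp: doubleton_eq_iff)
  ultimately show ?thesis
    using assms by (simp add: star_edges_def card_image)
qed

lemma card_tree_edges:
  assumes "finite I" "\<forall>i\<in>I. s i > 0"
  shows "card (tree_edges I s) = sum s I"
  unfolding tree_edges_eq_UN_star_edges using assms
  by (simp add: card_UN_disjoint finite_star_edges star_edges_disjoint card_star_edges)

lemma only_edge_leaving_star:
  "only_edge_leaving (tree_edges I s) (insert (Ctr i) (range (Lf i))) (Ctr i) Root"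
  unfolding only_edge_leaving_def tree_edges_def by (auto simp: doubleton_eq_iff)

lemma only_edge_leaving_leaf: "only_edge_leaving (tree_edges I s) {Lf i j} (Lf i j) (Ctr i)"
  unfolding only_edge_leaving_def tree_edges_def by (auto simp: doubleton_eq_iff)

lemma tree_edge_only_edge_leaving:
  assumes "e \<in> tree_edges I s"
  shows "\<exists>x y S. e = {x, y} \<and> Root \<notin> S \<and> only_edge_leaving (tree_edges I s) S x y"
proof -
  from assms consider i j where "e = {Ctr i, Lf i j}" | i where "e = {Root, Ctr i}"
    unfolding tree_edges_def by blast
  then show ?thesis
  proof cases
    case (1 i j)
    then have "e = {Lf i j, Ctr i}" by (simp add: insert_commute)
    with only_edge_leaving_leaf[of I s i j] show ?thesis
      by (intro exI[of _ "Lf i j"] exI[of _ "Ctr i"] exI[of _ "{Lf i j}"]) simp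
  next
    case (2 i)
    then have "e = {Ctr i, Root}" by (simp add: insert_commute)
    with only_edge_leaving_star[of I s i] show ?thesis
      by (intro exI[of _ "Ctr i"] exI[of _ Root] exI[of _ "insert (Ctr i) (range (Lf i))"]) auto
  qed
qed

lemma tree_robot_cycle_card_traversed_edges:
  "robot_cycle (tree_edges I s) Root ps \<Longrightarrow> 2 * card (traversed_edges ps) \<le> path_len ps"
  by (erule robot_cycle_card_traversed_edges[OF _ tree_edge_only_edge_leaving])

lemma traverses_star_root_edge:
  assumes "robot_cycle (tree_edges I s) Root ps" "e \<in> star_edges s i" "traverses ps e"
  shows "traverses ps {Root, Ctr i}"
proof (cases "e = {Root, Ctr i}")
  case False
  obtain t where t: "Suc t < length ps" "{ps ! t, ps ! Suc t} = e"
    using assms(3) by (auto simp: traverses_def)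
  with False assms(2) have "ps ! t \<in> insert (Ctr i) (range (Lf i))"
    unfolding star_edges_def by (auto simp: doubleton_eq_iff)
  moreover have "is_path (tree_edges I s) ps" "hd ps \<notin> insert (Ctr i) (range (Lf i))"
    using assms(1) by (auto simp: robot_cycle_def)
  ultimately obtain t' where "t' < t" "{ps ! t', ps ! Suc t'} = {Ctr i, Root}"
    using path_enters_through_only_edge[OF _ only_edge_leaving_star] t(1) by (meson Suc_lessD)
  with t(1) show ?thesis
    unfolding traverses_def by (metis Suc_lessD insert_commute less_trans_Suc)
qed (use assms in simp)

lemma traversed_edges_eq_UN_star_edges:
  assumes cycles: "\<And>j. j \<in> J \<Longrightarrow> robot_cycle (tree_edges I s) Root (W j)"
    and disjoint: "\<And>j j'. j \<in> J \<Longrightarrow> j' \<in> J \<Longrightarrow> j \<noteq> j' \<Longrightarrow>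
      traversed_edges (W j) \<inter> traversed_edges (W j') = {}"
    and cover: "tree_edges I s \<subseteq> (\<Union>j\<in>J. traversed_edges (W j))"
    and "j \<in> J"
  shows "traversed_edges (W j) =
    (\<Union>i\<in>{i\<in>I. {Root, Ctr i} \<in> traversed_edges (W j)}. star_edges s i)"
proof (intro equalityI subsetI)
  fix e assume e: "e \<in> traversed_edges (W j)"
  then have "e \<in> tree_edges I s"
    using cycles[OF \<open>j \<in> J\<close>] traversed_edges_subset by (auto simp: robot_cycle_def)
  then obtain i where "i \<in> I" "e \<in> star_edges s i"
    unfolding tree_edges_eq_UN_star_edges by blast
  with e show "e \<in> (\<Union>i\<in>{i\<in>I. {Root, Ctr i} \<in> traversed_edges (W j)}. star_edges s i)"
    using traverses_star_root_edge[OF cycles[OF \<open>j \<in> J\<close>]]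
    by (auto simp: traversed_edges_def)
next
  fix e assume "e \<in> (\<Union>i\<in>{i\<in>I. {Root, Ctr i} \<in> traversed_edges (W j)}. star_edges s i)"
  then obtain i where i: "i \<in> I" "{Root, Ctr i} \<in> traversed_edges (W j)" "e \<in> star_edges s i"
    by blast
  then obtain j' where j': "j' \<in> J" "e \<in> traversed_edges (W j')"
    using cover unfolding tree_edges_eq_UN_star_edges by blast
  then have "{Root, Ctr i} \<in> traversed_edges (W j')"
    using traverses_star_root_edge[OF cycles[OF \<open>j' \<in> J\<close>] i(3)]
    by (simp add: traversed_edges_def)
  with i(2) have "j' = j" using disjoint[OF j'(1) \<open>j \<in> J\<close>] by blast
  with j' show "e \<in> traversed_edges (W j)" by simp
qed

lemma cge_imp_ebp:
  assumes "finite I" "\<forall>i\<in>I. s i > 0" "sum s I = B * k"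
    and "cge_yes (tree_edges I s) Root k (2 * B)"
  shows "ebp_yes I s B k"
proof -
  obtain W where W: "\<And>j. j < k \<Longrightarrow> robot_cycle (tree_edges I s) Root (W j)"
    "\<And>j. j < k \<Longrightarrow> path_len (W j) \<le> 2 * B"
    and cover: "\<forall>e\<in>tree_edges I s. \<exists>j<k. traverses (W j) e"
    using assms(4) unfolding cge_yes_def by blast
  define D where "D j = traversed_edges (W j)" for j
  define P where "P j = {i\<in>I. {Root, Ctr i} \<in> D j}" for j
  have card_D: "card (D j) \<le> B" if "j < k" for j
    using tree_robot_cycle_card_traversed_edges[OF W(1)] W(2) that unfolding D_def by fastforce
  have "D j \<subseteq> tree_edges I s" if "j < k" for j
    using W(1)[OF that] traversed_edges_subset unfolding D_def robot_cycle_def by blast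
  with cover have D_cover: "(\<Union>j<k. D j) = tree_edges I s"
    unfolding D_def traversed_edges_def by auto
  then have card_UN_D: "B * card {..<k} \<le> card (\<Union>j<k. D j)"
    using card_tree_edges[OF assms(1,2)] assms(3) by simp
  have disjoint: "D j \<inter> D j' = {}" if "j < k" "j' < k" "j \<noteq> j'" for j j'
    using disjoint_if_card_UN_ge[OF _ _ _ card_UN_D] card_D that
    by (simp add: D_def finite_traversed_edges)
  have D_eq: "D j = (\<Union>i\<in>P j. star_edges s i)" if "j < k" for j
    unfolding D_def P_def
    by (rule traversed_edges_eq_UN_star_edges[where J = "{..<k}"])
      (use W(1) disjoint D_cover that in \<open>auto simp: D_def\<close>)
  show ?thesis
    unfolding ebp_yes_def
  proof (intro exI[of _ P] conjI allI impI)
    show "(\<Union>j<k. P j) = I"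
    proof (intro equalityI subsetI)
      fix i assume "i \<in> I"
      then have "{Root, Ctr i} \<in> tree_edges I s"
        unfolding tree_edges_eq_UN_star_edges star_edges_def by blast
      with \<open>i \<in> I\<close> D_cover show "i \<in> (\<Union>j<k. P j)" unfolding P_def by blast
    qed (auto simp: P_def)
    show "P j \<inter> P j' = {}" if "j < k" "j' < k" "j \<noteq> j'" for j j'
      using disjoint[OF that] unfolding P_def by blast
    show "sum s (P j) = B" if "j < k" for j
    proof -
      have "card (D j) = (\<Sum>i\<in>P j. card (star_edges s i))"
        unfolding D_eq[OF that] using assms(1)
        by (intro card_UN_disjoint) (auto simp: P_def finite_star_edges star_edges_disjoint)
      also have "\<dots> = sum s (P j)"
        using assms(2) by (intro sum.cong) (auto simp: P_def card_star_edges)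
      finally show ?thesis
        using card_eq_bound_if_card_UN_ge[OF _ card_D card_UN_D] that by simp
    qed
  qed
qed

text \<open>The final return to the root is omitted, so that tours of several stars concatenate.\<close>
definition star_tour :: "('a \<Rightarrow> nat) \<Rightarrow> 'a \<Rightarrow> 'a tvert list" where
  "star_tour s i = Root # Ctr i # concat (map (\<lambda>j. [Lf i j, Ctr i]) [1..<s i])"

definition bin_tour :: "('a \<Rightarrow> nat) \<Rightarrow> 'a list \<Rightarrow> 'a tvert list" where
  "bin_tour s xs = concat (map (star_tour s) xs) @ [Root]"

lemma bin_tour_Cons: "bin_tour s (i # xs) = star_tour s i @ bin_tour s xs"
  by (simp add: bin_tour_def)

lemma bin_tour_starts_at_Root: "\<exists>zs. bin_tour s xs = Root # zs"
  by (cases xs) (auto simp: bin_tour_def star_tour_def)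

lemma is_path_star_tour:
  assumes "i \<in> I"
  shows "is_path (tree_edges I s) (star_tour s i @ [Root])"
proof -
  have "{Root, Ctr i} \<in> tree_edges I s" using assms by (auto simp: tree_edges_def)
  moreover have "is_path (tree_edges I s) (Ctr i # concat (map (\<lambda>j. [Lf i j, Ctr i]) js) @ [Root])"
    if "set js \<subseteq> {1..<s i}" for js
    using that
  proof (induction js)
    case Nil
    from \<open>{Root, Ctr i} \<in> tree_edges I s\<close> show ?case
      by (simp add: is_path_Cons_Cons is_path_def insert_commute)
  next
    case (Cons j js)
    then have "{Ctr i, Lf i j} \<in> tree_edges I s" using assms unfolding tree_edges_def by force
    with Cons show ?case by (simp add: is_path_Cons_Cons insert_commute)
  qed
  ultimately show ?thesis by (simp add: star_tour_def is_path_Cons_Cons)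
qed

lemma robot_cycle_bin_tour:
  "set xs \<subseteq> I \<Longrightarrow> robot_cycle (tree_edges I s) Root (bin_tour s xs)"
proof (induction xs)
  case Nil
  then show ?case by (simp add: robot_cycle_def is_path_def bin_tour_def)
next
  case (Cons i xs)
  obtain zs where zs: "bin_tour s xs = Root # zs" using bin_tour_starts_at_Root by blast
  with Cons have "is_path (tree_edges I s) (star_tour s i @ bin_tour s xs)"
    using is_path_append[OF is_path_star_tour[of i I s], of zs] by (simp add: robot_cycle_def)
  with Cons zs show ?case
    by (simp add: robot_cycle_def bin_tour_Cons star_tour_def)
qed

lemma path_len_bin_tour:
  assumes "\<forall>i\<in>set xs. s i > 0"
  shows "path_len (bin_tour s xs) = 2 * sum_list (map s xs)"
proof -
  have "length (star_tour s i) = 2 * s i" if "s i > 0" for i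
    using that by (simp add: star_tour_def length_concat comp_def sum_list_triv)
  with assms show ?thesis
    by (induction xs) (simp_all add: path_len_def bin_tour_def)
qed

lemma traverses_bin_tour:
  assumes "i \<in> set xs" "e \<in> star_edges s i"
  shows "traverses (bin_tour s xs) e"
proof -
  obtain as bs where xs: "xs = as @ i # bs" using assms(1) by (meson split_list)
  obtain zs where zs: "bin_tour s bs = Root # zs" using bin_tour_starts_at_Root by blast
  define pre where "pre = concat (map (star_tour s) as)"
  have tour: "bin_tour s xs = pre @ star_tour s i @ Root # zs"
    using zs by (simp add: xs pre_def bin_tour_def)
  show ?thesis
  proof (cases "e = {Root, Ctr i}")
    case True
    then show ?thesis
      using traverses_append_Cons_Cons[of pre] by (simp add: tour star_tour_def)
  next
    case False
    with assms(2) have "e \<in> (\<lambda>j. {Ctr i, Lf i j}) ` set [1..<s i]"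
      unfolding star_edges_def by simp
    then obtain j where "j \<in> set [1..<s i]" "e = {Lf i j, Ctr i}" by (blast intro: insert_commute)
    moreover from this(1) obtain us vs where "[1..<s i] = us @ j # vs"
      by (meson split_list)
    ultimately show ?thesis
      using traverses_append_Cons_Cons[of "pre @ Root # Ctr i # concat (map (\<lambda>j. [Lf i j, Ctr i]) us)"]
      by (simp add: tour star_tour_def)
  qed
qed

lemma ebp_imp_cge:
  assumes "finite I" "\<forall>i\<in>I. s i > 0" "ebp_yes I s B k"
  shows "cge_yes (tree_edges I s) Root k (2 * B)"
proof -
  obtain P where P: "(\<Union>j<k. P j) = I" "\<And>j. j < k \<Longrightarrow> sum s (P j) = B"
    using assms(3) unfolding ebp_yes_def by blast
  have P_sub: "P j \<subseteq> I" if "j < k" for j using P(1) that by blast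
  have "\<exists>xs. set xs = P j \<and> distinct xs" if "j < k" for j
    using P_sub[OF that] assms(1) by (simp add: finite_distinct_list finite_subset)
  then obtain xs where xs: "\<And>j. j < k \<Longrightarrow> set (xs j) = P j \<and> distinct (xs j)"
    by metis
  show ?thesis
    unfolding cge_yes_def
  proof (intro exI[of _ "\<lambda>j. bin_tour s (xs j)"] conjI allI impI ballI)
    fix j assume "j < k"
    with xs P_sub show "robot_cycle (tree_edges I s) Root (bin_tour s (xs j))"
      by (simp add: robot_cycle_bin_tour)
    have "\<forall>i\<in>set (xs j). s i > 0" using xs P_sub assms(2) \<open>j < k\<close> by blast
    then have "path_len (bin_tour s (xs j)) = 2 * sum s (P j)"
      using xs[OF \<open>j < k\<close>] by (simp add: path_len_bin_tour sum_list_distinct_conv_sum_set)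
    with P(2)[OF \<open>j < k\<close>] show "path_len (bin_tour s (xs j)) \<le> 2 * B" by simp
  next
    fix e assume "e \<in> tree_edges I s"
    then obtain i where "i \<in> I" "e \<in> star_edges s i"
      unfolding tree_edges_eq_UN_star_edges by blast
    moreover from \<open>i \<in> I\<close> obtain j where "j < k" "i \<in> P j" using P(1) by blast
    ultimately show "\<exists>j<k. traverses (bin_tour s (xs j)) e"
      using xs traverses_bin_tour[of i "xs j" e s] by blast
  qed
qed

theorem mainTheorem12:
  fixes I :: "'a set" and s :: "'a \<Rightarrow> nat" and B k :: nat
  assumes "finite I"
    and "\<forall>i\<in>I. s i > 0"
    and "B > 0" and "k > 0"
    and "sum s I = B * k"
  shows "ebp_yes I s B k \<longleftrightarrow> cge_yes (tree_edges I s) Root k (2 * B)"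
  using ebp_imp_cge[OF assms(1,2)] cge_imp_ebp[OF assms(1,2,5)] by blast

end
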